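(* Let $k$ be a binary kernel on a non-empty set $\mathcal X$. Then for all $x,y\in\mathcal X$: if $x\sim_k y$ then $x\sim_k x$.
   Context: A kernel on $\mathcal X$ is a symmetric positive semidefinite function $k:\mathcal X\times\mathcal X\to\mathbb R$. A kernel $k$ is binary if $k(x,y)\in\{0,1\}$ for all $x,y\in\mathcal X$. The relation induced by a binary kernel $k$ is $\sim_k=\{(x,y)\in\mathcal X\times\mathcal X : k(x,y)=1\}$. *)

theory Defs
  imports Complex_Main
begin

definition is_kernel :: "'a set \<Rightarrow> ('a \<Rightarrow> 'a \<Rightarrow> real) \<Rightarrow> bool" where
  "is_kernel X k \<longleftrightarrow>
     (\<forall>x\<in>X. \<forall>y\<in>X. k x y = k y x) \<and>
     (\<forall>(n::nat) (xs::nat \<Rightarrow> 'a) (c::nat \<Rightarrow> real).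
        (\<forall>i<n. xs i \<in> X) \<longrightarrow> (\<Sum>i<n. \<Sum>j<n. c i * c j * k (xs i) (xs j)) \<ge> 0)"

definition is_binary_kernel :: "'a set \<Rightarrow> ('a \<Rightarrow> 'a \<Rightarrow> real) \<Rightarrow> bool" where
  "is_binary_kernel X k \<longleftrightarrow> is_kernel X k \<and> (\<forall>x\<in>X. \<forall>y\<in>X. k x y \<in> {0, 1})"

definition kernel_rel :: "'a set \<Rightarrow> ('a \<Rightarrow> 'a \<Rightarrow> real) \<Rightarrow> ('a \<times> 'a) set" where
  "kernel_rel X k = {(x, y). x \<in> X \<and> y \<in> X \<and> k x y = 1}"

end

theory Submission
  imports Defs
begin

text \<open>Testing positive semidefiniteness on the two points x, y with weights 1, -1 gives
  k x y + k y x \<le> k x x + k y y. For a binary symmetric kernel with k x y = 1 this forces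
  k x x + k y y \<ge> 2, so both diagonal entries equal 1.\<close>

lemma is_kernel_two_point_bound:
  assumes "is_kernel X k" and "x \<in> X" and "y \<in> X"
  shows "k x y + k y x \<le> k x x + k y y"
proof -
  define xs :: "nat \<Rightarrow> 'a" where "xs = (\<lambda>i. if i = 0 then x else y)"
  define c :: "nat \<Rightarrow> real" where "c = (\<lambda>i. if i = 0 then 1 else -1)"
  have "(\<Sum>i<2. \<Sum>j<2. c i * c j * k (xs i) (xs j)) \<ge> 0"
    using assms unfolding is_kernel_def xs_def by simp
  then show ?thesis
    by (simp add: numeral_2_eq_2 xs_def c_def)
qed

lemma is_binary_kernel_diag_eq_1:
  assumes "is_binary_kernel X k" and "x \<in> X" and "y \<in> X" and "k x y = 1"
  shows "k x x = 1"
proof -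
  have kernel: "is_kernel X k" and binary: "\<And>u v. u \<in> X \<Longrightarrow> v \<in> X \<Longrightarrow> k u v \<in> {0, 1}"
    using assms(1) unfolding is_binary_kernel_def by auto
  have "k y x = 1"
    using kernel assms(2-4) unfolding is_kernel_def by metis
  then have "2 \<le> k x x + k y y"
    using is_kernel_two_point_bound[OF kernel assms(2,3)] assms(4) by simp
  then show ?thesis
    using binary[OF assms(2,2)] binary[OF assms(3,3)] by auto
qed

theorem lemma1:
  fixes X :: "'a set" and k :: "'a \<Rightarrow> 'a \<Rightarrow> real"
  assumes "X \<noteq> {}" and "is_binary_kernel X k"
  shows "\<forall>x\<in>X. \<forall>y\<in>X. (x, y) \<in> kernel_rel X k \<longrightarrow> (x, x) \<in> kernel_rel X k"
  using is_binary_kernel_diag_eq_1[OF assms(2)] by (auto simp: kernel_rel_def)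

end
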